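(* Let $G=\mathrm{GL}_n(q)$ with natural module $V=\langle e_1,\dots,e_n\rangle_{\mathbb{F}_q}$, $1\le j\le n-1$, $P=\mathrm{Stab}_G(\langle e_1,\dots,e_j\rangle)$ with Levi subgroup $L=G_j\times G_{n-j}$, where $G_j=\mathrm{GL}(\langle e_1,\dots,e_j\rangle)$ and $G_{n-j}=\mathrm{GL}(\langle e_{j+1},\dots,e_n\rangle)$. Then the Harish-Chandra induction satisfies $$R^G_L(\mathrm{reg}_{G_j}\otimes 1_{G_{n-j}})=\prod_{i=0}^{j-1}(\tau_n-q^i\cdot 1_G).$$
   Context: $\tau_n(g)=q^{\dim_{\mathbb{F}_q}\mathrm{Ker}(g-1_V)}$ is the permutation character of $G$ on the vectors of $V$; $\mathrm{reg}_H$ is the regular character of $H$; $R^G_L$ is Harish-Chandra induction (inflate from $L$ to $P$, then induce to $G$). *)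

theory Defs
  imports "Jordan_Normal_Form.Matrix" Complex_Main
begin

text \<open>Matrices over a finite field 'a (so q = CARD('a)); V = 'a^n as column vectors
  carrier_vec n with standard basis e_1..e_n (indices 0..n-1).\<close>

definition GLn :: "nat \<Rightarrow> ('a::{finite,field}) mat set" where
  "GLn n = {A \<in> carrier_mat n n. invertible_mat A}"

definition ginv :: "nat \<Rightarrow> 'a::{finite,field} mat \<Rightarrow> 'a mat" where
  "ginv n A = (THE B. B \<in> carrier_mat n n \<and> A * B = 1\<^sub>m n \<and> B * A = 1\<^sub>m n)"

text \<open>P = stabiliser of span(e_1..e_j): block upper triangular matrices.\<close>
definition parabolic :: "nat \<Rightarrow> nat \<Rightarrow> 'a::{finite,field} mat set" where
  "parabolic n j = {A \<in> GLn n. \<forall>i k. j \<le> i \<and> i < n \<and> k < j \<longrightarrow> A $$ (i, k) = 0}"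

definition blockTL :: "nat \<Rightarrow> 'a mat \<Rightarrow> 'a mat" where
  "blockTL j A = mat j j (\<lambda>(i, k). A $$ (i, k))"

definition blockBR :: "nat \<Rightarrow> nat \<Rightarrow> 'a mat \<Rightarrow> 'a mat" where
  "blockBR n j A = mat (n - j) (n - j) (\<lambda>(i, k). A $$ (i + j, k + j))"

definition reg_GL :: "nat \<Rightarrow> 'a::{finite,field} mat \<Rightarrow> complex" where
  "reg_GL m A = (if A = 1\<^sub>m m then of_nat (card (GLn m :: 'a mat set)) else 0)"

definition triv_char :: "'a mat \<Rightarrow> complex" where
  "triv_char A = 1"

definition tensor_char :: "('a mat \<Rightarrow> complex) \<Rightarrow> ('a mat \<Rightarrow> complex) \<Rightarrow> 'a mat \<times> 'a mat \<Rightarrow> complex" where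
  "tensor_char \<chi> \<psi> = (\<lambda>(A, D). \<chi> A * \<psi> D)"

definition inflate :: "nat \<Rightarrow> nat \<Rightarrow> ('a mat \<times> 'a mat \<Rightarrow> complex) \<Rightarrow> 'a mat \<Rightarrow> complex" where
  "inflate n j \<psi> p = \<psi> (blockTL j p, blockBR n j p)"

definition induce :: "nat \<Rightarrow> nat \<Rightarrow> ('a::{finite,field} mat \<Rightarrow> complex) \<Rightarrow> 'a mat \<Rightarrow> complex" where
  "induce n j \<chi> g = (1 / of_nat (card (parabolic n j :: 'a mat set))) *
     (\<Sum>x\<in>GLn n. (let h = x * g * ginv n x in if h \<in> parabolic n j then \<chi> h else 0))"

definition HC_ind :: "nat \<Rightarrow> nat \<Rightarrow> ('a::{finite,field} mat \<times> 'a mat \<Rightarrow> complex) \<Rightarrow> 'a mat \<Rightarrow> complex" where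
  "HC_ind n j \<psi> = induce n j (inflate n j \<psi>)"

text \<open>Permutation character of G on the vectors of V (= q^dim Ker(g-1)).\<close>
definition tau :: "nat \<Rightarrow> 'a::{finite,field} mat \<Rightarrow> complex" where
  "tau n g = of_nat (card {v \<in> carrier_vec n. g *\<^sub>v v = v})"

end

theory Submission
  imports Defs "Jordan_Normal_Form.Determinant"
begin

text \<open>
  Unfolding the induced character, the value at \<open>g\<close> is \<open>|GL_j| / |P|\<close> times the number of
  \<open>x \<in> G\<close> such that \<open>x g x\<^sup>-\<^sup>1\<close> lies in \<open>P\<close> with trivial \<open>G_j\<close>-block, i.e. fixes \<open>e_1, \<dots>, e_j\<close>.
  This says that \<open>g\<close> fixes the first \<open>j\<close> columns of \<open>x\<^sup>-\<^sup>1\<close>, so we count invertible matrices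
  whose first \<open>j\<close> columns lie in the fixed space \<open>K = Ker(g - 1)\<close>. Grouped by those columns,
  they are the cosets \<open>y U\<close> of the group \<open>U\<close> of matrices whose first \<open>j\<close> columns are
  \<open>e_1, \<dots>, e_j\<close>, one for each linearly independent \<open>j\<close>-tuple in \<open>K\<close>; there are
  \<open>\<Prod>i<j. (|K| - q\<^sup>i)\<close> such tuples, and \<open>|K| = \<tau>\<^sub>n(g)\<close>. The same count for the subspace
  \<open>\<langle>e_1, \<dots>, e_j\<rangle>\<close> in place of \<open>K\<close> gives \<open>|P| = |GL_j| \<cdot> |U|\<close>, and everything else cancels.
\<close>

lemma card_carrier_vec: "card (carrier_vec m :: 'a::finite vec set) = card (UNIV :: 'a set) ^ m"
proof -
  have "bij_betw list_of_vec (carrier_vec m :: 'a vec set) {xs. set xs \<subseteq> UNIV \<and> length xs = m}"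
  proof (rule bij_betw_byWitness[where f' = vec_of_list])
    show "list_of_vec ` carrier_vec m \<subseteq> {xs. set xs \<subseteq> (UNIV :: 'a set) \<and> length xs = m}"
      by (auto dest: carrier_vecD)
    show "vec_of_list ` {xs. set xs \<subseteq> (UNIV :: 'a set) \<and> length xs = m} \<subseteq> carrier_vec m"
      by (auto intro: carrier_vecI)
  qed (simp_all add: vec_list list_vec)
  from bij_betw_same_card[OF this] show ?thesis
    using card_lists_length_eq[of "UNIV :: 'a set" m] by simp
qed

lemma finite_carrier_vec [simp]: "finite (carrier_vec m :: 'a::finite vec set)"
  by (rule card_ge_0_finite) (simp add: card_carrier_vec finite_UNIV_card_ge_0)

lemma finite_carrier_mat [simp]: "finite (carrier_mat n m :: 'a::finite mat set)"
proof (rule finite_subset)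
  show "carrier_mat n m \<subseteq> mat_of_cols n ` {ts. set ts \<subseteq> (carrier_vec n :: 'a vec set) \<and> length ts = m}"
  proof
    fix A :: "'a mat" assume A: "A \<in> carrier_mat n m"
    then have "A = mat_of_cols n (cols A)" using mat_of_cols_cols[of A] by simp
    moreover have "set (cols A) \<subseteq> carrier_vec n" "length (cols A) = m"
      using A by (auto simp: cols_def)
    ultimately show "A \<in> mat_of_cols n ` {ts. set ts \<subseteq> carrier_vec n \<and> length ts = m}" by blast
  qed
  show "finite (mat_of_cols n ` {ts. set ts \<subseteq> (carrier_vec n :: 'a vec set) \<and> length ts = m})"
    by (intro finite_imageI finite_lists_length_eq) simp
qed

lemma two_le_card_field: "2 \<le> card (UNIV :: 'a::{finite,field} set)"
proof -
  have "card {0::'a, 1} \<le> card (UNIV :: 'a set)" by (rule card_mono) auto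
  then show ?thesis by simp
qed

section \<open>Linearly independent tuples of column vectors\<close>

definition col_span :: "nat \<Rightarrow> 'a::field vec list \<Rightarrow> 'a vec set" where
  "col_span n ts = (\<lambda>c. mat_of_cols n ts *\<^sub>v c) ` carrier_vec (length ts)"

definition indep_cols :: "nat \<Rightarrow> 'a::field vec list \<Rightarrow> bool" where
  "indep_cols n ts \<longleftrightarrow>
     (\<forall>c \<in> carrier_vec (length ts). mat_of_cols n ts *\<^sub>v c = 0\<^sub>v n \<longrightarrow> c = 0\<^sub>v (length ts))"

definition is_subspace :: "nat \<Rightarrow> 'a::field vec set \<Rightarrow> bool" where
  "is_subspace n K \<longleftrightarrow> K \<subseteq> carrier_vec n \<and> 0\<^sub>v n \<in> K \<and>
     (\<forall>u\<in>K. \<forall>v\<in>K. u + v \<in> K) \<and> (\<forall>a. \<forall>v\<in>K. a \<cdot>\<^sub>v v \<in> K)"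

definition indep_tuples :: "nat \<Rightarrow> nat \<Rightarrow> 'a::field vec set \<Rightarrow> 'a vec list set" where
  "indep_tuples n i K = {ts. length ts = i \<and> set ts \<subseteq> K \<and> indep_cols n ts}"

lemma is_subspaceD:
  assumes "is_subspace n K"
  shows "K \<subseteq> carrier_vec n" "0\<^sub>v n \<in> K" "u \<in> K \<Longrightarrow> v \<in> K \<Longrightarrow> u + v \<in> K"
    "v \<in> K \<Longrightarrow> a \<cdot>\<^sub>v v \<in> K"
  using assms unfolding is_subspace_def by blast+

lemma finite_subspace: "is_subspace n K \<Longrightarrow> finite (K :: 'a::{finite,field} vec set)"
  using finite_subset[OF is_subspaceD(1) finite_carrier_vec] .

lemma mat_of_cols_mult_vec_index:
  assumes r: "r < n" and c: "c \<in> carrier_vec (length ts)"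
  shows "(mat_of_cols n ts *\<^sub>v c) $ r = (\<Sum>k<length ts. ts ! k $ r * c $ k)"
proof -
  have "(mat_of_cols n ts *\<^sub>v c) $ r = (\<Sum>k\<in>{0..<length ts}. row (mat_of_cols n ts) r $ k * c $ k)"
    using r c by (simp add: scalar_prod_def)
  also have "\<dots> = (\<Sum>k<length ts. ts ! k $ r * c $ k)"
    unfolding atLeast0LessThan using r by (intro sum.cong) (auto simp: mat_of_cols_index)
  finally show ?thesis .
qed

lemma mat_of_cols_snoc_mult_vec:
  fixes v :: "'a::comm_semiring_0 vec"
  assumes v: "v \<in> carrier_vec n" and c: "c \<in> carrier_vec (length ts)"
  shows "mat_of_cols n (ts @ [v]) *\<^sub>v (c @\<^sub>v vec 1 (\<lambda>_. a)) = mat_of_cols n ts *\<^sub>v c + a \<cdot>\<^sub>v v"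
proof (rule eq_vecI)
  fix r assume "r < dim_vec (mat_of_cols n ts *\<^sub>v c + a \<cdot>\<^sub>v v)"
  then have r: "r < n" using v by simp
  have dc: "dim_vec c = length ts" using c by (rule carrier_vecD)
  have c': "c @\<^sub>v vec 1 (\<lambda>_. a) \<in> carrier_vec (length (ts @ [v]))"
    using dc by (intro carrier_vecI) simp
  have "(mat_of_cols n (ts @ [v]) *\<^sub>v (c @\<^sub>v vec 1 (\<lambda>_. a))) $ r
      = (\<Sum>k<length ts. ts ! k $ r * c $ k) + v $ r * a"
    using mat_of_cols_mult_vec_index[OF r c'] dc by (simp add: nth_append)
  also have "\<dots> = (mat_of_cols n ts *\<^sub>v c + a \<cdot>\<^sub>v v) $ r"
    using mat_of_cols_mult_vec_index[OF r c] r v by (simp add: mult.commute[of "v $ r" a])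
  finally show "(mat_of_cols n (ts @ [v]) *\<^sub>v (c @\<^sub>v vec 1 (\<lambda>_. a))) $ r
      = (mat_of_cols n ts *\<^sub>v c + a \<cdot>\<^sub>v v) $ r" .
qed (use v in simp)

lemma ball_carrier_vec_Suc:
  "(\<forall>c' \<in> carrier_vec (Suc l). P c') \<longleftrightarrow> (\<forall>c \<in> carrier_vec l. \<forall>a. P (c @\<^sub>v vec 1 (\<lambda>_. a)))"
proof -
  have ball_dim_one: "(\<forall>d \<in> carrier_vec 1. Q d) \<longleftrightarrow> (\<forall>a. Q (vec 1 (\<lambda>_. a)))" for Q :: "'a vec \<Rightarrow> bool"
  proof
    assume all: "\<forall>a. Q (vec 1 (\<lambda>_. a))"
    show "\<forall>d \<in> carrier_vec 1. Q d"
    proof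
      fix d :: "'a vec" assume "d \<in> carrier_vec 1"
      then have "vec 1 (\<lambda>_. d $ 0) = d" by (intro eq_vecI) auto
      moreover have "Q (vec 1 (\<lambda>_. d $ 0))" using all by (rule spec)
      ultimately show "Q d" by (rule subst)
    qed
  qed simp
  have "(\<forall>c' \<in> carrier_vec (l + 1). P c') \<longleftrightarrow> (\<forall>c \<in> carrier_vec l. \<forall>d \<in> carrier_vec 1. P (c @\<^sub>v d))"
    by (rule all_vec_append)
  also have "\<dots> \<longleftrightarrow> (\<forall>c \<in> carrier_vec l. \<forall>a. P (c @\<^sub>v vec 1 (\<lambda>_. a)))"
    by (intro ball_cong[OF refl] ball_dim_one)
  finally show ?thesis by simp
qed

lemma append_vec_singleton_eq_zero_iff:
  assumes c: "c \<in> carrier_vec l"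
  shows "c @\<^sub>v vec 1 (\<lambda>_. a) = 0\<^sub>v (Suc l) \<longleftrightarrow> c = 0\<^sub>v l \<and> a = (0 :: 'a::zero)"
proof -
  have zero_split: "0\<^sub>v (Suc l) = 0\<^sub>v l @\<^sub>v (0\<^sub>v 1 :: 'a vec)"
    by (intro eq_vecI) auto
  have "vec 1 (\<lambda>_. a) = 0\<^sub>v 1 \<longleftrightarrow> a = 0"
  proof
    assume "vec 1 (\<lambda>_. a) = 0\<^sub>v 1"
    then have "vec 1 (\<lambda>_. a) $ 0 = 0\<^sub>v 1 $ 0" by (rule arg_cong)
    then show "a = 0" by simp
  qed (intro eq_vecI, auto)
  then show ?thesis unfolding zero_split append_vec_eq[OF c zero_carrier_vec] by simp
qed

lemma indep_cols_snoc_iff_coeffs: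
  fixes v :: "'a::field vec"
  assumes v: "v \<in> carrier_vec n"
  shows "indep_cols n (ts @ [v]) \<longleftrightarrow> (\<forall>c \<in> carrier_vec (length ts). \<forall>a.
           mat_of_cols n ts *\<^sub>v c + a \<cdot>\<^sub>v v = 0\<^sub>v n \<longrightarrow> c = 0\<^sub>v (length ts) \<and> a = 0)"
proof -
  have "indep_cols n (ts @ [v]) \<longleftrightarrow> (\<forall>c \<in> carrier_vec (length ts). \<forall>a.
      mat_of_cols n (ts @ [v]) *\<^sub>v (c @\<^sub>v vec 1 (\<lambda>_. a)) = 0\<^sub>v n \<longrightarrow>
      c @\<^sub>v vec 1 (\<lambda>_. a) = 0\<^sub>v (Suc (length ts)))"
    unfolding indep_cols_def length_append_singleton by (rule ball_carrier_vec_Suc)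
  also have "\<dots> \<longleftrightarrow> (\<forall>c \<in> carrier_vec (length ts). \<forall>a.
      mat_of_cols n ts *\<^sub>v c + a \<cdot>\<^sub>v v = 0\<^sub>v n \<longrightarrow> c = 0\<^sub>v (length ts) \<and> a = 0)"
    by (intro ball_cong[OF refl] all_cong)
      (simp only: mat_of_cols_snoc_mult_vec[OF v] append_vec_singleton_eq_zero_iff)
  finally show ?thesis .
qed

lemma in_col_span_if_combination_zero:
  fixes v :: "'a::field vec"
  assumes v: "v \<in> carrier_vec n" and c: "c \<in> carrier_vec (length ts)"
    and eq: "mat_of_cols n ts *\<^sub>v c + a \<cdot>\<^sub>v v = 0\<^sub>v n" and a: "a \<noteq> 0"
  shows "v \<in> col_span n ts"
proof -
  let ?M = "mat_of_cols n ts"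
  have "?M *\<^sub>v ((- 1 / a) \<cdot>\<^sub>v c) = (- 1 / a) \<cdot>\<^sub>v (?M *\<^sub>v c)"
    by (rule mult_mat_vec[OF mat_of_cols_carrier(1) c])
  also have "\<dots> = v"
  proof (rule eq_vecI)
    fix r assume "r < dim_vec v"
    then have r: "r < n" using v by simp
    have "(?M *\<^sub>v c + a \<cdot>\<^sub>v v) $ r = 0" using eq r by simp
    then have "(?M *\<^sub>v c) $ r = - (a * v $ r)" using r v by (simp add: eq_neg_iff_add_eq_0)
    then show "((- 1 / a) \<cdot>\<^sub>v (?M *\<^sub>v c)) $ r = v $ r" using r a by simp
  qed (use v in simp)
  finally show ?thesis
    unfolding col_span_def using c by (metis image_eqI smult_carrier_vec)
qed

lemma indep_cols_snoc_iff:
  fixes v :: "'a::field vec"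
  assumes v: "v \<in> carrier_vec n"
  shows "indep_cols n (ts @ [v]) \<longleftrightarrow> indep_cols n ts \<and> v \<notin> col_span n ts"
proof -
  let ?M = "mat_of_cols n ts"
  have "indep_cols n ts \<and> v \<notin> col_span n ts" if I: "indep_cols n (ts @ [v])"
  proof
    show "indep_cols n ts"
      unfolding indep_cols_def
    proof (intro ballI impI)
      fix c assume c: "c \<in> carrier_vec (length ts)" and "?M *\<^sub>v c = 0\<^sub>v n"
      then have "?M *\<^sub>v c + 0 \<cdot>\<^sub>v v = 0\<^sub>v n" using v by (intro eq_vecI) auto
      then show "c = 0\<^sub>v (length ts)" using I c v by (simp add: indep_cols_snoc_iff_coeffs)
    qed
    show "v \<notin> col_span n ts"
    proof
      assume "v \<in> col_span n ts"
      then obtain c where c: "c \<in> carrier_vec (length ts)" and "v = ?M *\<^sub>v c"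
        unfolding col_span_def by blast
      then have "?M *\<^sub>v c + (- 1) \<cdot>\<^sub>v v = 0\<^sub>v n"
        by (intro eq_vecI) auto
      then have "- 1 = (0 :: 'a)" using I c unfolding indep_cols_snoc_iff_coeffs[OF v] by blast
      then show False by simp
    qed
  qed
  moreover have "indep_cols n (ts @ [v])" if I: "indep_cols n ts" and nv: "v \<notin> col_span n ts"
    unfolding indep_cols_snoc_iff_coeffs[OF v]
  proof (intro ballI allI impI)
    fix c a assume c: "c \<in> carrier_vec (length ts)" and eq: "?M *\<^sub>v c + a \<cdot>\<^sub>v v = 0\<^sub>v n"
    have a: "a = 0" using in_col_span_if_combination_zero[OF v c eq] nv by blast
    then have "a \<cdot>\<^sub>v v = 0\<^sub>v n" using v by (intro eq_vecI) auto
    moreover have "?M *\<^sub>v c \<in> carrier_vec n" by (rule mult_mat_vec_carrier[OF mat_of_cols_carrier(1) c])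
    ultimately have "?M *\<^sub>v c = 0\<^sub>v n" using eq by simp
    then show "c = 0\<^sub>v (length ts) \<and> a = 0" using I c a unfolding indep_cols_def by simp
  qed
  ultimately show ?thesis by blast
qed

lemma col_span_carrier: "col_span n ts \<subseteq> carrier_vec n"
  unfolding col_span_def by (auto intro!: carrier_vecI)

lemma indep_cols_Nil: "indep_cols n []"
  unfolding indep_cols_def by auto

lemma col_span_Nil: "col_span n ([] :: 'a::field vec list) = {0\<^sub>v n}"
proof -
  have "carrier_vec 0 = {0\<^sub>v 0 :: 'a vec}" by auto
  moreover have "mat_of_cols n [] *\<^sub>v 0\<^sub>v 0 = (0\<^sub>v n :: 'a vec)" by (intro eq_vecI) auto
  ultimately show ?thesis unfolding col_span_def by simp
qed

lemma vec_split_last: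
  assumes "c \<in> carrier_vec (l + 1)"
  shows "c = vec l (\<lambda>k. c $ k) @\<^sub>v vec 1 (\<lambda>_. c $ l)"
  using assms by (intro eq_vecI) (auto simp: carrier_vecD less_Suc_eq)

lemma col_span_subset:
  fixes K :: "'a::field vec set"
  assumes K: "is_subspace n K"
  shows "set ts \<subseteq> K \<Longrightarrow> col_span n ts \<subseteq> K"
proof (induction ts rule: rev_induct)
  case Nil
  show ?case using is_subspaceD(2)[OF K] by (simp add: col_span_Nil)
next
  case (snoc v ts)
  have vK: "v \<in> K" and IH: "col_span n ts \<subseteq> K" using snoc by auto
  have v: "v \<in> carrier_vec n" using vK is_subspaceD(1)[OF K] by blast
  show ?case
  proof
    fix x assume "x \<in> col_span n (ts @ [v])"
    then obtain c' where c': "c' \<in> carrier_vec (length ts + 1)"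
      and x: "x = mat_of_cols n (ts @ [v]) *\<^sub>v c'"
      unfolding col_span_def by auto
    define c where "c = vec (length ts) (\<lambda>k. c' $ k)"
    have c: "c \<in> carrier_vec (length ts)" unfolding c_def by simp
    have "x = mat_of_cols n (ts @ [v]) *\<^sub>v (c @\<^sub>v vec 1 (\<lambda>_. c' $ length ts))"
      unfolding x c_def by (rule arg_cong[OF vec_split_last[OF c']])
    also have "\<dots> = mat_of_cols n ts *\<^sub>v c + c' $ length ts \<cdot>\<^sub>v v"
      by (rule mat_of_cols_snoc_mult_vec[OF v c])
    finally have "x = mat_of_cols n ts *\<^sub>v c + c' $ length ts \<cdot>\<^sub>v v" .
    moreover have "mat_of_cols n ts *\<^sub>v c \<in> K" using IH c unfolding col_span_def by blast
    ultimately show "x \<in> K" using is_subspaceD(3,4)[OF K] vK by simp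
  qed
qed

lemma card_col_span:
  fixes ts :: "'a::{finite,field} vec list"
  assumes I: "indep_cols n ts"
  shows "card (col_span n ts) = card (UNIV :: 'a set) ^ length ts"
proof -
  let ?M = "mat_of_cols n ts"
  have "inj_on (\<lambda>c. ?M *\<^sub>v c) (carrier_vec (length ts))"
  proof (rule inj_onI)
    fix c d assume c: "c \<in> carrier_vec (length ts)" and d: "d \<in> carrier_vec (length ts)"
      and eq: "?M *\<^sub>v c = ?M *\<^sub>v d"
    have "?M *\<^sub>v (c - d) = ?M *\<^sub>v c - ?M *\<^sub>v d"
      by (rule mult_minus_distrib_mat_vec[OF mat_of_cols_carrier(1) c d])
    also have "\<dots> = 0\<^sub>v n"
      unfolding eq by (rule minus_cancel_vec[OF mult_mat_vec_carrier[OF mat_of_cols_carrier(1) d]])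
    finally have "c - d = 0\<^sub>v (length ts)" using I c d unfolding indep_cols_def by simp
    then have "(c - d) $ i = 0" if "i < length ts" for i using that by simp
    then show "c = d" using c d by (intro eq_vecI) (auto simp: carrier_vecD)
  qed
  then show ?thesis unfolding col_span_def by (simp add: card_image card_carrier_vec)
qed

lemma indep_tuples_0: "indep_tuples n 0 K = {[]}"
  unfolding indep_tuples_def by (auto simp: indep_cols_Nil)

lemma indep_tuples_Suc:
  assumes K: "is_subspace n K"
  shows "indep_tuples n (Suc i) K
    = (\<lambda>(ts, v). ts @ [v]) ` (SIGMA ts : indep_tuples n i K. K - col_span n ts)"
proof
  show "indep_tuples n (Suc i) K \<subseteq> (\<lambda>(ts, v). ts @ [v]) ` (SIGMA ts : indep_tuples n i K. K - col_span n ts)"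
  proof
    fix xs assume xs: "xs \<in> indep_tuples n (Suc i) K"
    then obtain ts v where xs_eq: "xs = ts @ [v]" and l: "length ts = i"
      unfolding indep_tuples_def by (auto simp: length_Suc_conv_rev)
    have "set ts \<subseteq> K" "v \<in> K" "indep_cols n (ts @ [v])"
      using xs unfolding xs_eq indep_tuples_def by auto
    moreover have "v \<in> carrier_vec n" using \<open>v \<in> K\<close> is_subspaceD(1)[OF K] by blast
    ultimately have "(ts, v) \<in> (SIGMA ts : indep_tuples n i K. K - col_span n ts)"
      using l indep_cols_snoc_iff unfolding indep_tuples_def by auto
    then show "xs \<in> (\<lambda>(ts, v). ts @ [v]) ` (SIGMA ts : indep_tuples n i K. K - col_span n ts)"
      unfolding xs_eq by (rule rev_image_eqI) simp
  qed
  show "(\<lambda>(ts, v). ts @ [v]) ` (SIGMA ts : indep_tuples n i K. K - col_span n ts) \<subseteq> indep_tuples n (Suc i) K"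
    using is_subspaceD(1)[OF K] by (auto simp: indep_tuples_def indep_cols_snoc_iff)
qed

lemma finite_indep_tuples: "finite K \<Longrightarrow> finite (indep_tuples n i K)"
  by (rule finite_subset[of _ "{xs. set xs \<subseteq> K \<and> length xs = i}"])
    (auto simp: indep_tuples_def intro: finite_lists_length_eq)

lemma card_indep_tuples:
  fixes K :: "'a::{finite,field} vec set"
  assumes K: "is_subspace n K"
  shows "(of_nat (card (indep_tuples n i K)) :: 'b::comm_ring_1)
    = (\<Prod>k<i. of_nat (card K) - of_nat (card (UNIV :: 'a set)) ^ k)"
proof (induction i)
  case 0
  then show ?case by (simp add: indep_tuples_0)
next
  case (Suc i)
  let ?q = "card (UNIV :: 'a set)"
  have fK: "finite K" using K by (rule finite_subspace)
  have card_K_diff_span: "card (K - col_span n ts) = card K - ?q ^ i"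
    and q_le_K: "?q ^ i \<le> card K" if "ts \<in> indep_tuples n i K" for ts
  proof -
    have sub: "col_span n ts \<subseteq> K" using col_span_subset[OF K] that unfolding indep_tuples_def by blast
    have "card (col_span n ts) = ?q ^ i" using card_col_span that unfolding indep_tuples_def by auto
    then show "card (K - col_span n ts) = card K - ?q ^ i" "?q ^ i \<le> card K"
      using card_Diff_subset[OF finite_subset[OF sub fK] sub] card_mono[OF fK sub] by auto
  qed
  have "inj_on (\<lambda>(ts, v). ts @ [v]) (SIGMA ts : indep_tuples n i K. K - col_span n ts)"
    by (rule inj_onI) auto
  then have card_Suc: "card (indep_tuples n (Suc i) K) = (\<Sum>ts\<in>indep_tuples n i K. card (K - col_span n ts))"
    unfolding indep_tuples_Suc[OF K] using finite_indep_tuples[OF fK] fK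
    by (simp add: card_image card_SigmaI)
  have "(of_nat (card (indep_tuples n (Suc i) K)) :: 'b)
      = (\<Sum>ts\<in>indep_tuples n i K. of_nat (card K) - of_nat ?q ^ i)"
    unfolding card_Suc of_nat_sum by (intro sum.cong refl) (simp add: card_K_diff_span q_le_K of_nat_diff)
  then show ?case using Suc.IH by simp
qed

lemma indep_cols_extend:
  fixes ts :: "'a::{finite,field} vec list"
  shows "indep_cols n ts \<Longrightarrow> set ts \<subseteq> carrier_vec n \<Longrightarrow> length ts \<le> n \<Longrightarrow>
    \<exists>us. set us \<subseteq> carrier_vec n \<and> length (ts @ us) = n \<and> indep_cols n (ts @ us)"
proof (induction "n - length ts" arbitrary: ts)
  case 0
  then show ?case by (intro exI[of _ "[]"]) simp
next
  case (Suc m)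
  let ?q = "card (UNIV :: 'a set)"
  have lt: "length ts < n" using Suc.hyps by simp
  have "?q ^ length ts < ?q ^ n" using two_le_card_field[where 'a='a] lt by (intro power_strict_increasing) auto
  then have "card (col_span n ts) < card (carrier_vec n :: 'a vec set)"
    using card_col_span[OF Suc.prems(1)] card_carrier_vec[where 'a='a] by simp
  moreover have "card (carrier_vec n :: 'a vec set) \<le> card (col_span n ts)"
    if "carrier_vec n \<subseteq> col_span n ts"
    using that by (rule card_mono[OF finite_subset[OF col_span_carrier finite_carrier_vec]])
  ultimately obtain v where v: "v \<in> carrier_vec n" "v \<notin> col_span n ts"
    by fastforce
  have "indep_cols n (ts @ [v])" using indep_cols_snoc_iff[OF v(1)] Suc.prems v by simp
  moreover have "m = n - length (ts @ [v])" using Suc.hyps by simp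
  ultimately obtain us where "set us \<subseteq> carrier_vec n" "length (ts @ [v] @ us) = n" "indep_cols n (ts @ [v] @ us)"
    using Suc.hyps(1)[of "ts @ [v]"] Suc.prems v lt by auto
  then show ?case by (intro exI[of _ "v # us"]) (simp add: v)
qed

section \<open>Invertible matrices\<close>

lemma GLn_iff:
  "A \<in> GLn n \<longleftrightarrow> A \<in> carrier_mat n n \<and> (\<exists>B \<in> carrier_mat n n. A * B = 1\<^sub>m n \<and> B * A = 1\<^sub>m n)"
proof
  assume "A \<in> GLn n"
  then have A: "A \<in> carrier_mat n n" and "invertible_mat A" unfolding GLn_def by auto
  then obtain B where AB: "A * B = 1\<^sub>m n" and BA: "B * A = 1\<^sub>m (dim_row B)"
    unfolding invertible_mat_def inverts_mat_def by auto
  have "dim_row B = n" using arg_cong[OF BA, of dim_col] A by simp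
  moreover have "dim_col B = n" using arg_cong[OF AB, of dim_col] by simp
  ultimately show "A \<in> carrier_mat n n \<and> (\<exists>B \<in> carrier_mat n n. A * B = 1\<^sub>m n \<and> B * A = 1\<^sub>m n)"
    using A AB BA by auto
next
  assume "A \<in> carrier_mat n n \<and> (\<exists>B \<in> carrier_mat n n. A * B = 1\<^sub>m n \<and> B * A = 1\<^sub>m n)"
  then show "A \<in> GLn n"
    unfolding GLn_def invertible_mat_def inverts_mat_def square_mat.simps by auto
qed

lemma GLn_iff_det: "A \<in> GLn n \<longleftrightarrow> A \<in> carrier_mat n n \<and> det A \<noteq> (0 :: 'a::{finite,field})"
proof
  assume "A \<in> GLn n"
  then obtain B where A: "A \<in> carrier_mat n n" and B: "B \<in> carrier_mat n n" and "A * B = 1\<^sub>m n"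
    unfolding GLn_iff by blast
  then have "det A * det B = 1" using det_mult[OF A B] by simp
  then show "A \<in> carrier_mat n n \<and> det A \<noteq> 0" using A by auto
next
  assume A: "A \<in> carrier_mat n n \<and> det A \<noteq> 0"
  then have "A \<in> Units (ring_mat TYPE('a) n undefined)" by (intro det_non_zero_imp_unit) auto
  then show "A \<in> GLn n" unfolding GLn_iff Units_def ring_mat_def by auto
qed

lemma GLn_carrier: "A \<in> GLn n \<Longrightarrow> A \<in> carrier_mat n n"
  unfolding GLn_def by simp

lemma finite_GLn: "finite (GLn n :: 'a::{finite,field} mat set)"
  by (rule finite_subset[OF _ finite_carrier_mat[of n n]]) (auto simp: GLn_def)

lemma one_GLn: "1\<^sub>m n \<in> GLn n"
  unfolding GLn_iff by auto

lemma GLn_mult: "A \<in> GLn n \<Longrightarrow> B \<in> GLn n \<Longrightarrow> A * B \<in> GLn n"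
  by (auto simp: GLn_iff_det det_mult)

lemma ginv_inverse:
  fixes A :: "'a::{finite,field} mat"
  assumes "A \<in> GLn n"
  shows "ginv n A \<in> carrier_mat n n" "A * ginv n A = 1\<^sub>m n" "ginv n A * A = 1\<^sub>m n"
proof -
  obtain B where A: "A \<in> carrier_mat n n" and B: "B \<in> carrier_mat n n"
    and AB: "A * B = 1\<^sub>m n" and BA: "B * A = 1\<^sub>m n"
    using assms unfolding GLn_iff by blast
  have "ginv n A = B" unfolding ginv_def
  proof (rule the_equality)
    fix B' assume "B' \<in> carrier_mat n n \<and> A * B' = 1\<^sub>m n \<and> B' * A = 1\<^sub>m n"
    then have B': "B' \<in> carrier_mat n n" and AB': "A * B' = 1\<^sub>m n" by auto
    have "B' = (B * A) * B'" using BA B' by simp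
    also have "\<dots> = B * (A * B')" by (rule assoc_mult_mat[OF B A B'])
    also have "\<dots> = B" using B AB' by simp
    finally show "B' = B" .
  qed (use B AB BA in simp)
  then show "ginv n A \<in> carrier_mat n n" "A * ginv n A = 1\<^sub>m n" "ginv n A * A = 1\<^sub>m n"
    using B AB BA by simp_all
qed

lemma ginv_GLn: "A \<in> GLn n \<Longrightarrow> ginv n A \<in> GLn n"
  unfolding GLn_iff[of "ginv n A"] using ginv_inverse GLn_carrier by blast

lemma ginv_ginv:
  assumes A: "A \<in> GLn n"
  shows "ginv n (ginv n A) = A"
proof -
  note Ai = ginv_inverse[OF A] and Aii = ginv_inverse[OF ginv_GLn[OF A]]
  have "ginv n (ginv n A) = ginv n (ginv n A) * (ginv n A * A)" using Aii(1) Ai(3) by simp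
  also have "\<dots> = A"
    using assoc_mult_mat[OF Aii(1) Ai(1) GLn_carrier[OF A]] Aii(3) GLn_carrier[OF A] by simp
  finally show ?thesis .
qed

lemma mat_of_cols_GLn:
  assumes l: "length ts = n" and I: "indep_cols n (ts :: 'a::{finite,field} vec list)"
  shows "mat_of_cols n ts \<in> GLn n"
proof -
  have A: "mat_of_cols n ts \<in> carrier_mat n n" using l by auto
  have "det (mat_of_cols n ts) \<noteq> 0"
    unfolding det_0_iff_vec_prod_zero_field[OF A] using I l unfolding indep_cols_def by auto
  then show ?thesis using A unfolding GLn_iff_det by simp
qed

lemma mat_of_cols_first_cols_mult_vec:
  assumes y: "y \<in> carrier_mat n n" and j: "j \<le> n" and c: "c \<in> carrier_vec j"
  shows "mat_of_cols n (map (col y) [0..<j]) *\<^sub>v c = y *\<^sub>v (c @\<^sub>v 0\<^sub>v (n - j))"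
proof (rule eq_vecI)
  fix r assume "r < dim_vec (y *\<^sub>v (c @\<^sub>v 0\<^sub>v (n - j)))"
  then have r: "r < n" using y by simp
  have c0: "c @\<^sub>v 0\<^sub>v (n - j) \<in> carrier_vec (length (cols y))"
    using append_carrier_vec[OF c zero_carrier_vec, of "n - j"] j y by simp
  have "(y *\<^sub>v (c @\<^sub>v 0\<^sub>v (n - j))) $ r = (mat_of_cols n (cols y) *\<^sub>v (c @\<^sub>v 0\<^sub>v (n - j))) $ r"
    using mat_of_cols_cols[of y] y by simp
  also have "\<dots> = (\<Sum>k<n. col y k $ r * (c @\<^sub>v 0\<^sub>v (n - j)) $ k)"
    using mat_of_cols_mult_vec_index[OF r c0] y by simp
  also have "\<dots> = (\<Sum>k<j. col y k $ r * (c @\<^sub>v 0\<^sub>v (n - j)) $ k)"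
  proof (rule sum.mono_neutral_right)
    show "\<forall>k \<in> {..<n} - {..<j}. col y k $ r * (c @\<^sub>v 0\<^sub>v (n - j)) $ k = 0"
      using c j by (auto simp: carrier_vecD)
  qed (use j in auto)
  also have "\<dots> = (\<Sum>k<j. col y k $ r * c $ k)"
    using c j by (intro sum.cong) (auto simp: carrier_vecD)
  also have "\<dots> = (mat_of_cols n (map (col y) [0..<j]) *\<^sub>v c) $ r"
    using mat_of_cols_mult_vec_index[OF r, of c "map (col y) [0..<j]"] c by simp
  finally show "(mat_of_cols n (map (col y) [0..<j]) *\<^sub>v c) $ r = (y *\<^sub>v (c @\<^sub>v 0\<^sub>v (n - j))) $ r" ..
qed (use y in simp)

lemma indep_cols_first_cols:
  assumes y: "y \<in> GLn n" and j: "j \<le> n"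
  shows "indep_cols n (map (col y) [0..<j])"
  unfolding indep_cols_def
proof (intro ballI impI)
  fix c assume "c \<in> carrier_vec (length (map (col y) [0..<j]))"
    and "mat_of_cols n (map (col y) [0..<j]) *\<^sub>v c = 0\<^sub>v n"
  then have c: "c \<in> carrier_vec j" and "y *\<^sub>v (c @\<^sub>v 0\<^sub>v (n - j)) = 0\<^sub>v n"
    using mat_of_cols_first_cols_mult_vec[OF GLn_carrier[OF y] j] by auto
  moreover have "c @\<^sub>v 0\<^sub>v (n - j) \<in> carrier_vec (j + (n - j))"
    by (rule append_carrier_vec[OF c zero_carrier_vec])
  ultimately have "c @\<^sub>v 0\<^sub>v (n - j) = 0\<^sub>v n"
    using y j det_0_iff_vec_prod_zero_field[OF GLn_carrier[OF y]] unfolding GLn_iff_det by auto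
  also have "\<dots> = 0\<^sub>v j @\<^sub>v 0\<^sub>v (n - j)" using j by (intro eq_vecI) auto
  finally show "c = 0\<^sub>v (length (map (col y) [0..<j]))" using append_vec_eq[OF c] by simp
qed

section \<open>Invertible matrices with prescribed first columns\<close>

definition first_cols_in :: "nat \<Rightarrow> nat \<Rightarrow> 'a::{finite,field} vec set \<Rightarrow> 'a mat set" where
  "first_cols_in n j K = {y \<in> GLn n. \<forall>k<j. col y k \<in> K}"

definition first_cols_unit :: "nat \<Rightarrow> nat \<Rightarrow> 'a::{finite,field} mat set" where
  "first_cols_unit n j = {u \<in> GLn n. \<forall>k<j. col u k = unit_vec n k}"

lemma mult_unit_vec:
  fixes A :: "'a::semiring_1 mat"
  assumes A: "A \<in> carrier_mat nr n" and k: "k < n"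
  shows "A *\<^sub>v unit_vec n k = col A k"
  using col_mult2[OF A one_carrier_mat k] right_mult_one_mat[OF A] k by simp

lemma GLn_mult_left_cancel:
  assumes y: "y \<in> GLn n" and u: "u \<in> carrier_mat n n" and u': "u' \<in> carrier_mat n n"
    and eq: "y * u = y * u'"
  shows "u = u'"
proof -
  note yi = ginv_inverse[OF y] and yc = GLn_carrier[OF y]
  have "u = (ginv n y * y) * u" using yi(3) u by simp
  also have "\<dots> = ginv n y * (y * u')" unfolding eq[symmetric] by (rule assoc_mult_mat[OF yi(1) yc u])
  also have "\<dots> = (ginv n y * y) * u'" by (rule assoc_mult_mat[OF yi(1) yc u', symmetric])
  also have "\<dots> = u'" using yi(3) u' by simp
  finally show ?thesis .
qed

lemma first_cols_fiber:
  assumes y0: "y0 \<in> first_cols_in n j K" and j: "j \<le> n"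
  shows "{y \<in> first_cols_in n j K. map (col y) [0..<j] = map (col y0) [0..<j]}
    = (\<lambda>u. y0 * u) ` first_cols_unit n j"
proof -
  have y0G: "y0 \<in> GLn n" using y0 unfolding first_cols_in_def by simp
  note y0c = GLn_carrier[OF y0G] and yi = ginv_inverse[OF y0G]
  have col_coset: "col (y0 * u) k = y0 *\<^sub>v col u k" if "u \<in> GLn n" "k < j" for u k
    using that j by (intro col_mult2[OF y0c GLn_carrier]) auto
  show ?thesis
  proof (intro equalityI subsetI)
    fix y assume "y \<in> (\<lambda>u. y0 * u) ` first_cols_unit n j"
    then obtain u where u: "u \<in> GLn n" "\<forall>k<j. col u k = unit_vec n k" and y: "y = y0 * u"
      unfolding first_cols_unit_def by blast
    have "col y k = col y0 k" if "k < j" for k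
      using col_coset[OF u(1) that] u(2) that j mult_unit_vec[OF y0c] unfolding y by simp
    then show "y \<in> {y \<in> first_cols_in n j K. map (col y) [0..<j] = map (col y0) [0..<j]}"
      using y0 GLn_mult[OF y0G u(1)] unfolding y first_cols_in_def by simp
  next
    fix y assume "y \<in> {y \<in> first_cols_in n j K. map (col y) [0..<j] = map (col y0) [0..<j]}"
    then have yG: "y \<in> GLn n" and cols: "\<And>k. k < j \<Longrightarrow> col y k = col y0 k"
      unfolding first_cols_in_def by (auto simp: map_eq_conv)
    define u where "u = ginv n y0 * y"
    have uG: "u \<in> GLn n" unfolding u_def by (rule GLn_mult[OF ginv_GLn[OF y0G] yG])
    have "y0 * u = (y0 * ginv n y0) * y"
      unfolding u_def by (rule assoc_mult_mat[OF y0c yi(1) GLn_carrier[OF yG], symmetric])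
    then have yu: "y = y0 * u" using yi(2) GLn_carrier[OF yG] by simp
    have "col u k = unit_vec n k" if k: "k < j" for k
    proof -
      have "col u k = ginv n y0 *\<^sub>v col y0 k"
        unfolding u_def cols[OF k, symmetric] using k j by (intro col_mult2[OF yi(1) GLn_carrier[OF yG]]) simp
      also have "\<dots> = col (ginv n y0 * y0) k" using k j by (intro col_mult2[OF yi(1) y0c, symmetric]) simp
      finally show ?thesis using yi(3) k j by simp
    qed
    then show "y \<in> (\<lambda>u. y0 * u) ` first_cols_unit n j"
      using uG yu unfolding first_cols_unit_def by blast
  qed
qed

lemma first_cols_onto:
  assumes K: "is_subspace n K" and j: "j \<le> n" and ts: "ts \<in> indep_tuples n j K"
  shows "\<exists>y \<in> first_cols_in n j K. map (col y) [0..<j] = ts"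
proof -
  have tsI: "indep_cols n ts" and tsl: "length ts = j" and tsK: "set ts \<subseteq> K"
    using ts unfolding indep_tuples_def by auto
  have tsC: "set ts \<subseteq> carrier_vec n" using tsK is_subspaceD(1)[OF K] by blast
  obtain us where us: "set us \<subseteq> carrier_vec n" "length (ts @ us) = n" "indep_cols n (ts @ us)"
    using indep_cols_extend[OF tsI tsC] tsl j by auto
  define y where "y = mat_of_cols n (ts @ us)"
  have colk: "col y k = ts ! k" if k: "k < j" for k
  proof -
    have "ts ! k \<in> carrier_vec n" using k tsl tsC by (auto dest: nth_mem)
    moreover have "k < length (ts @ us)" using k tsl us(2) j by simp
    ultimately show ?thesis using k tsl unfolding y_def by (simp add: nth_append)
  qed
  have "ts ! k \<in> K" if "k < j" for k using that tsl tsK by (auto dest: nth_mem)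
  then have "y \<in> first_cols_in n j K"
    using mat_of_cols_GLn[OF us(2,3)] colk unfolding first_cols_in_def y_def[symmetric] by simp
  moreover have "map (col y) [0..<j] = ts" by (rule nth_equalityI) (simp_all add: colk tsl)
  ultimately show ?thesis by blast
qed

lemma card_first_cols_fiber:
  fixes y0 :: "'a::{finite,field} mat"
  assumes y0: "y0 \<in> first_cols_in n j K" and j: "j \<le> n"
  shows "card {y \<in> first_cols_in n j K. map (col y) [0..<j] = map (col y0) [0..<j]}
    = card (first_cols_unit n j :: 'a mat set)"
proof -
  have "inj_on (\<lambda>u. y0 * u) (first_cols_unit n j)"
  proof (rule inj_onI)
    fix u u' assume "u \<in> first_cols_unit n j" "u' \<in> first_cols_unit n j" "y0 * u = y0 * u'"
    then show "u = u'"
      using y0 GLn_mult_left_cancel[of y0 n u u']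
      unfolding first_cols_in_def first_cols_unit_def GLn_def by auto
  qed
  then show ?thesis unfolding first_cols_fiber[OF y0 j] by (rule card_image)
qed

lemma card_first_cols_unit_neq_0:
  assumes j: "j \<le> n"
  shows "card (first_cols_unit n j :: 'a::{finite,field} mat set) \<noteq> 0"
proof -
  have "1\<^sub>m n \<in> first_cols_unit n j" using one_GLn j unfolding first_cols_unit_def by simp
  moreover have "finite (first_cols_unit n j :: 'a mat set)"
    by (rule finite_subset[OF _ finite_GLn]) (auto simp: first_cols_unit_def)
  ultimately show ?thesis by (auto simp: card_0_eq)
qed

lemma card_first_cols_in:
  fixes K :: "'a::{finite,field} vec set"
  assumes K: "is_subspace n K" and j: "j \<le> n"
  shows "card (first_cols_in n j K) = card (indep_tuples n j K) * card (first_cols_unit n j :: 'a mat set)"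
proof -
  let ?first = "\<lambda>y. map (col y) [0..<j]"
  have fin: "finite (first_cols_in n j K)"
    by (rule finite_subset[OF _ finite_GLn[of n]]) (auto simp: first_cols_in_def)
  have first_in: "?first ` first_cols_in n j K \<subseteq> indep_tuples n j K"
  proof (rule image_subsetI)
    fix y assume "y \<in> first_cols_in n j K"
    then show "?first y \<in> indep_tuples n j K"
      using indep_cols_first_cols[of y n j] j unfolding first_cols_in_def indep_tuples_def by auto
  qed
  have "card (first_cols_in n j K) = (\<Sum>ts\<in>indep_tuples n j K. card {y \<in> first_cols_in n j K. ?first y = ts})"
    unfolding card_eq_sum
    by (rule sum.group[OF fin finite_indep_tuples[OF finite_subspace[OF K]] first_in, symmetric])
  also have "\<dots> = (\<Sum>ts\<in>indep_tuples n j K. card (first_cols_unit n j :: 'a mat set))"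
  proof (rule sum.cong[OF refl])
    fix ts assume "ts \<in> indep_tuples n j K"
    then obtain y0 where "y0 \<in> first_cols_in n j K" and "?first y0 = ts"
      using first_cols_onto[OF K j] by blast
    then show "card {y \<in> first_cols_in n j K. ?first y = ts} = card (first_cols_unit n j :: 'a mat set)"
      using card_first_cols_fiber[OF _ j] by blast
  qed
  finally show ?thesis by simp
qed

section \<open>The parabolic subgroup and the induced character\<close>

definition fixed_vecs :: "nat \<Rightarrow> 'a::field mat \<Rightarrow> 'a vec set" where
  "fixed_vecs n g = {v \<in> carrier_vec n. g *\<^sub>v v = v}"

definition coord_subspace :: "nat \<Rightarrow> nat \<Rightarrow> 'a::field vec set" where
  "coord_subspace n j = {v \<in> carrier_vec n. \<forall>r. j \<le> r \<and> r < n \<longrightarrow> v $ r = 0}"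

lemma is_subspace_carrier_vec: "is_subspace n (carrier_vec n :: 'a::field vec set)"
  unfolding is_subspace_def by auto

lemma is_subspace_fixed_vecs:
  assumes g: "g \<in> carrier_mat n n"
  shows "is_subspace n (fixed_vecs n g)"
  unfolding is_subspace_def fixed_vecs_def
proof (intro conjI ballI allI)
  have "g *\<^sub>v 0\<^sub>v n = 0\<^sub>v n" using g by (intro eq_vecI) auto
  then show "0\<^sub>v n \<in> {v \<in> carrier_vec n. g *\<^sub>v v = v}" by simp
next
  fix u v assume "u \<in> {v \<in> carrier_vec n. g *\<^sub>v v = v}" "v \<in> {v \<in> carrier_vec n. g *\<^sub>v v = v}"
  then show "u + v \<in> {v \<in> carrier_vec n. g *\<^sub>v v = v}"
    using mult_add_distrib_mat_vec[OF g] by auto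
next
  fix a v assume "v \<in> {v \<in> carrier_vec n. g *\<^sub>v v = v}"
  then show "a \<cdot>\<^sub>v v \<in> {v \<in> carrier_vec n. g *\<^sub>v v = v}"
    using mult_mat_vec[OF g] by auto
qed auto

lemma is_subspace_coord_subspace: "is_subspace n (coord_subspace n j :: 'a::field vec set)"
  unfolding is_subspace_def coord_subspace_def by (auto simp: carrier_vecD)

lemma card_coord_subspace:
  assumes j: "j \<le> n"
  shows "card (coord_subspace n j :: 'a::{finite,field} vec set) = card (UNIV :: 'a set) ^ j"
proof -
  have "bij_betw (\<lambda>v. vec j (\<lambda>r. v $ r)) (coord_subspace n j :: 'a vec set) (carrier_vec j)"
  proof (rule bij_betw_byWitness[where f' = "\<lambda>w. vec n (\<lambda>r. if r < j then w $ r else 0)"])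
    show "\<forall>v \<in> coord_subspace n j. vec n (\<lambda>r. if r < j then vec j (($) v) $ r else 0) = (v :: 'a vec)"
      unfolding coord_subspace_def by (auto intro!: eq_vecI simp: carrier_vecD)
    show "\<forall>w \<in> carrier_vec j. vec j (($) (vec n (\<lambda>r. if r < j then w $ r else 0))) = (w :: 'a vec)"
      using j by (auto intro!: eq_vecI simp: carrier_vecD)
  qed (auto simp: coord_subspace_def)
  then show ?thesis using bij_betw_same_card card_carrier_vec[where 'a='a] by metis
qed

lemma parabolic_eq_first_cols_in:
  assumes j: "j \<le> n"
  shows "parabolic n j = first_cols_in n j (coord_subspace n j :: 'a::{finite,field} vec set)"
proof -
  have "(\<forall>i k. j \<le> i \<and> i < n \<and> k < j \<longrightarrow> A $$ (i, k) = 0) \<longleftrightarrow> (\<forall>k<j. col A k \<in> coord_subspace n j)"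
    if "A \<in> GLn n" for A :: "'a mat"
    using GLn_carrier[OF that] j unfolding coord_subspace_def by auto
  then show ?thesis unfolding parabolic_def first_cols_in_def by blast
qed

lemma GLn_eq_first_cols_in: "GLn j = first_cols_in j j (carrier_vec j :: 'a::{finite,field} vec set)"
  unfolding first_cols_in_def by (auto dest: GLn_carrier)

lemma first_cols_unit_all: "first_cols_unit j j = {1\<^sub>m j :: 'a::{finite,field} mat}"
proof -
  have "u = 1\<^sub>m j" if "u \<in> carrier_mat j j" "\<forall>k<j. col u k = unit_vec j k" for u :: "'a mat"
    using that by (intro eq_matI) (auto simp flip: index_col)
  then show ?thesis unfolding first_cols_unit_def using one_GLn by (auto dest: GLn_carrier)
qed

lemma parabolic_blockTL_one_iff:
  assumes h: "h \<in> GLn n" and j: "j \<le> n"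
  shows "h \<in> parabolic n j \<and> blockTL j h = 1\<^sub>m j \<longleftrightarrow> (\<forall>k<j. col h k = unit_vec n k)"
proof -
  have hc: "h \<in> carrier_mat n n" using h by (rule GLn_carrier)
  have "h \<in> parabolic n j \<and> blockTL j h = 1\<^sub>m j
      \<longleftrightarrow> (\<forall>r k. r < n \<and> k < j \<longrightarrow> h $$ (r, k) = (if r = k then 1 else 0))"
  proof
    assume P: "h \<in> parabolic n j \<and> blockTL j h = 1\<^sub>m j"
    show "\<forall>r k. r < n \<and> k < j \<longrightarrow> h $$ (r, k) = (if r = k then 1 else 0)"
    proof (intro allI impI)
      fix r k assume rk: "r < n \<and> k < j"
      show "h $$ (r, k) = (if r = k then 1 else 0)"
      proof (cases "r < j")
        case True
        then have "h $$ (r, k) = blockTL j h $$ (r, k)" using rk unfolding blockTL_def by simp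
        then show ?thesis using P True rk by simp
      next
        case False
        then show ?thesis using P rk unfolding parabolic_def by auto
      qed
    qed
  next
    assume "\<forall>r k. r < n \<and> k < j \<longrightarrow> h $$ (r, k) = (if r = k then 1 else 0)"
    then show "h \<in> parabolic n j \<and> blockTL j h = 1\<^sub>m j"
      using h j unfolding parabolic_def blockTL_def by (auto intro!: eq_matI)
  qed
  also have "\<dots> \<longleftrightarrow> (\<forall>k<j. col h k = unit_vec n k)"
  proof
    assume "\<forall>k<j. col h k = unit_vec n k"
    then have "h $$ (r, k) = unit_vec n k $ r" if "r < n" "k < j" for r k
      using hc j that by (metis index_col carrier_matD less_le_trans)
    then show "\<forall>r k. r < n \<and> k < j \<longrightarrow> h $$ (r, k) = (if r = k then 1 else 0)"
      using j by auto
  qed (use hc j in \<open>auto intro!: eq_vecI\<close>)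
  finally show ?thesis .
qed

lemma conj_col_unit_iff:
  assumes x: "x \<in> GLn n" and g: "g \<in> carrier_mat n n" and k: "k < n"
  shows "col (x * g * ginv n x) k = unit_vec n k \<longleftrightarrow> g *\<^sub>v col (ginv n x) k = col (ginv n x) k"
proof -
  note xc = GLn_carrier[OF x] and xi = ginv_inverse[OF x]
  let ?w = "col (ginv n x) k"
  have w: "?w \<in> carrier_vec n" using xi(1) k by simp
  have "col (x * g * ginv n x) k = (x * g) *\<^sub>v ?w"
    by (rule col_mult2[OF mult_carrier_mat[OF xc g] xi(1) k])
  also have "\<dots> = x *\<^sub>v (g *\<^sub>v ?w)" by (rule assoc_mult_mat_vec[OF xc g w])
  finally have col_conj: "col (x * g * ginv n x) k = x *\<^sub>v (g *\<^sub>v ?w)" .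
  have unit: "unit_vec n k = x *\<^sub>v ?w"
    using col_mult2[OF xc xi(1) k] xi(2) k by simp
  show ?thesis
  proof
    assume "col (x * g * ginv n x) k = unit_vec n k"
    then have "ginv n x *\<^sub>v (x *\<^sub>v (g *\<^sub>v ?w)) = ginv n x *\<^sub>v (x *\<^sub>v ?w)"
      unfolding col_conj unit by simp
    then show "g *\<^sub>v ?w = ?w"
      using assoc_mult_mat_vec[OF xi(1) xc, symmetric] xi(3) g w by simp
  qed (simp add: col_conj unit)
qed

lemma inflate_reg_triv_conj:
  fixes g :: "'a::{finite,field} mat"
  assumes x: "x \<in> GLn n" and g: "g \<in> GLn n" and j: "j \<le> n"
  shows "(let h = x * g * ginv n x in
           if h \<in> parabolic n j then inflate n j (tensor_char (reg_GL j) triv_char) h else 0)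
       = (if ginv n x \<in> first_cols_in n j (fixed_vecs n g) then of_nat (card (GLn j :: 'a mat set)) else 0)"
proof -
  define h where "h = x * g * ginv n x"
  have hG: "h \<in> GLn n" unfolding h_def by (intro GLn_mult x g ginv_GLn)
  have xic: "ginv n x \<in> carrier_mat n n" by (rule ginv_inverse(1)[OF x])
  have "h \<in> parabolic n j \<and> blockTL j h = 1\<^sub>m j \<longleftrightarrow> (\<forall>k<j. col h k = unit_vec n k)"
    by (rule parabolic_blockTL_one_iff[OF hG j])
  also have "\<dots> \<longleftrightarrow> (\<forall>k<j. g *\<^sub>v col (ginv n x) k = col (ginv n x) k)"
    unfolding h_def using conj_col_unit_iff[OF x GLn_carrier[OF g]] j by auto
  also have "\<dots> \<longleftrightarrow> ginv n x \<in> first_cols_in n j (fixed_vecs n g)"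
    unfolding first_cols_in_def fixed_vecs_def using ginv_GLn[OF x] xic j
    by (auto intro: col_carrier_vec[OF less_le_trans[OF _ j] xic])
  finally show ?thesis
    unfolding h_def[symmetric] Let_def inflate_def tensor_char_def triv_char_def reg_GL_def by auto
qed

lemma card_ginv_preimage:
  assumes S: "S \<subseteq> GLn n"
  shows "card {x \<in> GLn n. ginv n x \<in> S} = card S"
proof (rule bij_betw_same_card[of "ginv n"], rule bij_betw_byWitness[where f' = "ginv n"])
  show "ginv n ` S \<subseteq> {x \<in> GLn n. ginv n x \<in> S}" using S by (auto simp: ginv_ginv ginv_GLn)
qed (use S in \<open>auto simp: ginv_ginv\<close>)

lemma HC_ind_reg_triv:
  fixes g :: "'a::{finite,field} mat"
  assumes g: "g \<in> GLn n" and j: "j \<le> n"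
  shows "HC_ind n j (tensor_char (reg_GL j) triv_char) g
    = of_nat (card (first_cols_in n j (fixed_vecs n g))) * of_nat (card (GLn j :: 'a mat set))
      / of_nat (card (parabolic n j :: 'a mat set))"
proof -
  let ?S = "first_cols_in n j (fixed_vecs n g)"
  let ?c = "of_nat (card (GLn j :: 'a mat set)) :: complex"
  have "(\<Sum>x\<in>GLn n. if ginv n x \<in> ?S then ?c else 0) = (\<Sum>x\<in>{x \<in> GLn n. ginv n x \<in> ?S}. ?c)"
    by (rule sum.inter_filter[symmetric]) (rule finite_GLn)
  also have "\<dots> = of_nat (card ?S) * ?c"
    using card_ginv_preimage[of ?S n] unfolding first_cols_in_def by simp
  finally show ?thesis
    unfolding HC_ind_def induce_def using inflate_reg_triv_conj[OF _ g j]
    by (simp cong: sum.cong)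
qed

lemma card_parabolic:
  assumes j: "j \<le> n"
  shows "card (parabolic n j :: 'a::{finite,field} mat set)
    = card (GLn j :: 'a mat set) * card (first_cols_unit n j :: 'a mat set)"
proof -
  have "int (card (indep_tuples n j (coord_subspace n j :: 'a vec set)))
      = int (card (indep_tuples j j (carrier_vec j :: 'a vec set)))"
    unfolding card_indep_tuples[OF is_subspace_coord_subspace] card_indep_tuples[OF is_subspace_carrier_vec]
      card_coord_subspace[OF j] card_carrier_vec ..
  then show ?thesis
    unfolding parabolic_eq_first_cols_in[OF j] card_first_cols_in[OF is_subspace_coord_subspace j]
      GLn_eq_first_cols_in card_first_cols_in[OF is_subspace_carrier_vec le_refl] first_cols_unit_all
    by simp
qed

theorem proposition3p3:
  fixes n j :: nat and g :: "'a::{finite,field} mat"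
  assumes "1 \<le> j" and "j \<le> n - 1" and "g \<in> GLn n"
  shows "HC_ind n j (tensor_char (reg_GL j) triv_char) g
         = (\<Prod>i<j. tau n g - of_nat (card (UNIV :: 'a set)) ^ i)"
proof -
  have j: "j \<le> n" using assms(1,2) by simp
  have K: "is_subspace n (fixed_vecs n g)" by (rule is_subspace_fixed_vecs[OF GLn_carrier[OF assms(3)]])
  let ?T = "card (indep_tuples n j (fixed_vecs n g))" and ?G = "card (GLn j :: 'a mat set)"
  have "?G \<noteq> 0" using one_GLn[of j] by (auto simp: card_0_eq[OF finite_GLn])
  with card_first_cols_unit_neq_0[OF j, where 'a='a] have "HC_ind n j (tensor_char (reg_GL j) triv_char) g = of_nat ?T"
    unfolding HC_ind_reg_triv[OF assms(3) j] card_first_cols_in[OF K j] card_parabolic[OF j]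
    by (simp add: field_simps)
  also have "\<dots> = (\<Prod>i<j. tau n g - of_nat (card (UNIV :: 'a set)) ^ i)"
    unfolding card_indep_tuples[OF K] tau_def fixed_vecs_def[symmetric] ..
  finally show ?thesis .
qed

end
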